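(* Let $q\in L^\infty(M)$ and $i$ a positive integer. The following are equivalent: (i) for every $u\in L^\infty_*(M)$, the quadratic form $Q^i_u(f)=\int_M uf^2\,dv$ is indefinite on $E_i(q)$; (ii) there exists a finite family of eigenfunctions $f_1,\dots,f_k\in E_i(q)$ such that $\sum_{j=1}^k f_j^2=1$.
   Context: $M$ is a compact connected Riemannian manifold, possibly with boundary, with volume element $dv$ and volume $V(M)$; $\Delta$ is the Laplace–Beltrami operator on functions, with Dirichlet or Neumann boundary conditions if $\partial M\ne\emptyset$ (boundary sufficiently regular, e.g. $C^1$, in the Neumann case). For real-valued $q\in L^\infty(M)$, the eigenvalues of $-\Delta+q$ repeated with multiplicity are $\lambda_1(q)<\lambda_2(q)\le\cdots$ and $E_i(q)$ is the eigenspace of $\lambda_i(q)$. $L^\infty_*(M)=\{u\in L^\infty(M):\int_M u\,dv=0\}$. A quadratic form is indefinite if it is neither positive definite nor negative definite, i.e. there exist nonzero $f,g$ with $Q(f)\le0\le Q(g)$. *)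

theory Defs
  imports "HOL-Analysis.Analysis"
begin

definition Linf :: "'a measure \<Rightarrow> ('a \<Rightarrow> real) set" where
  "Linf M = {u. u \<in> borel_measurable M \<and> (\<exists>C. AE x in M. \<bar>u x\<bar> \<le> C)}"

definition Linf_star :: "'a measure \<Rightarrow> ('a \<Rightarrow> real) set" where
  "Linf_star M = {u \<in> Linf M. integral\<^sup>L M u = 0}"

definition quad_form :: "'a measure \<Rightarrow> ('a \<Rightarrow> real) \<Rightarrow> ('a \<Rightarrow> real) \<Rightarrow> real" where
  "quad_form M u f = (\<integral>x. u x * (f x)\<^sup>2 \<partial>M)"

definition nonzero_ae :: "'a measure \<Rightarrow> ('a \<Rightarrow> real) \<Rightarrow> bool" where
  "nonzero_ae M f \<longleftrightarrow> \<not> (AE x in M. f x = 0)"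

definition indefinite_on :: "'a measure \<Rightarrow> ('a \<Rightarrow> real) set \<Rightarrow> (('a \<Rightarrow> real) \<Rightarrow> real) \<Rightarrow> bool" where
  "indefinite_on M E Q \<longleftrightarrow>
     (\<exists>f\<in>E. \<exists>g\<in>E. nonzero_ae M f \<and> nonzero_ae M g \<and> Q f \<le> 0 \<and> 0 \<le> Q g)"

definition fspan :: "nat \<Rightarrow> (nat \<Rightarrow> 'a \<Rightarrow> real) \<Rightarrow> ('a \<Rightarrow> real) set" where
  "fspan n b = {(\<lambda>x. \<Sum>j<n. c j * b j x) | c. True}"

end

(*
  If f_1^2 + ... + f_k^2 = 1 a.e., then Q_u(f_1) + ... + Q_u(f_k) is the integral of u, which
  vanishes; hence among the f_j that are not a.e. zero, some have Q_u(f_j) <= 0 and some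
  Q_u(f_j) >= 0.

  Conversely, pass to an a.e. linearly independent basis B_1, ..., B_m of the span E. A sum of
  squares of elements of E is already a sum of m such squares, so the sums of squares with
  integral 1 form a convex set C; it is compact since independence bounds the coefficients.
  If 1 is not a sum of squares, the constant 1/V (V the volume) is not in C. Let s be the point
  of C nearest to 1/V in L^2 and w = s - 1/V. Then w has mean 0, is not a.e. zero, and the
  variational inequality at the nearest point gives  int w f^2 >= int w^2 > 0  for every f in E
  with  int f^2 = 1: the form Q_w is positive definite on E, hence not indefinite.
*)
theory Submission
  imports Defs
begin

lemma Linf_measurable: "u \<in> Linf M \<Longrightarrow> u \<in> borel_measurable M"
  by (simp add: Linf_def)

lemma (in finite_measure) integrable_Linf: "u \<in> Linf M \<Longrightarrow> integrable M u"
  unfolding Linf_def using integrable_const_bound[of u] by (auto simp: real_norm_def)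

lemma Linf_const: "(\<lambda>x. c) \<in> Linf M"
  by (auto simp: Linf_def)

lemma Linf_add:
  assumes "f \<in> Linf M" "g \<in> Linf M"
  shows "(\<lambda>x. f x + g x) \<in> Linf M"
proof -
  obtain C D where "AE x in M. \<bar>f x\<bar> \<le> C" "AE x in M. \<bar>g x\<bar> \<le> D"
    using assms by (auto simp: Linf_def)
  then have "AE x in M. \<bar>f x + g x\<bar> \<le> C + D"
    by eventually_elim auto
  then show ?thesis
    using assms by (auto simp: Linf_def)
qed

lemma Linf_mult:
  assumes "f \<in> Linf M" "g \<in> Linf M"
  shows "(\<lambda>x. f x * g x) \<in> Linf M"
proof -
  obtain C D where "AE x in M. \<bar>f x\<bar> \<le> C" "AE x in M. \<bar>g x\<bar> \<le> D"
    using assms by (auto simp: Linf_def)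
  then have "AE x in M. \<bar>f x * g x\<bar> \<le> C * D"
    by eventually_elim (auto simp: abs_mult intro: mult_mono)
  then show ?thesis
    using assms by (auto simp: Linf_def)
qed

lemma Linf_diff:
  assumes "f \<in> Linf M" "g \<in> Linf M"
  shows "(\<lambda>x. f x - g x) \<in> Linf M"
  using Linf_add[OF assms(1) Linf_mult[OF Linf_const assms(2)], of "- 1"] by simp

lemma Linf_power2: "f \<in> Linf M \<Longrightarrow> (\<lambda>x. (f x)\<^sup>2) \<in> Linf M"
  unfolding power2_eq_square by (rule Linf_mult)

lemma Linf_sum: "(\<And>i. i \<in> I \<Longrightarrow> f i \<in> Linf M) \<Longrightarrow> (\<lambda>x. \<Sum>i\<in>I. f i x) \<in> Linf M"
proof (induction I rule: infinite_finite_induct)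
  case (insert i I)
  then have "(\<lambda>x. f i x + (\<Sum>i\<in>I. f i x)) \<in> Linf M"
    by (intro Linf_add) auto
  with insert show ?case
    by simp
qed (auto intro: Linf_const)

lemma Linf_common_bound:
  fixes m :: nat
  assumes "\<And>a. a < m \<Longrightarrow> B a \<in> Linf M"
  shows "\<exists>C. AE x in M. \<forall>a<m. \<bar>B a x\<bar> \<le> C"
  using assms
proof (induction m)
  case (Suc m)
  obtain C where "AE x in M. \<forall>a<m. \<bar>B a x\<bar> \<le> C"
    using Suc by auto
  moreover obtain D where "AE x in M. \<bar>B m x\<bar> \<le> D"
    using Suc.prems[of m] by (auto simp: Linf_def)
  ultimately have "AE x in M. \<forall>a<Suc m. \<bar>B a x\<bar> \<le> max C D"
    by eventually_elim (auto simp: less_Suc_eq)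
  then show ?case
    by blast
qed simp

lemma power2_le_of_abs_le: "\<bar>x\<bar> \<le> K \<Longrightarrow> x\<^sup>2 \<le> K\<^sup>2" for x K :: real
  by (metis abs_ge_zero order_trans power2_le_iff_abs_le)

lemma (in finite_measure) integral_power2_pos_iff:
  assumes "f \<in> Linf M"
  shows "0 < (\<integral>x. (f x)\<^sup>2 \<partial>M) \<longleftrightarrow> nonzero_ae M f"
proof -
  have "(\<integral>x. (f x)\<^sup>2 \<partial>M) = 0 \<longleftrightarrow> (AE x in M. f x = 0)"
    using assms by (subst integral_nonneg_eq_0_iff_AE) (auto intro: integrable_Linf Linf_power2)
  then show ?thesis
    by (auto simp: nonzero_ae_def order_less_le)
qed

lemma (in finite_measure) first_variation_nonneg:
  assumes "w \<in> Linf M" "h \<in> Linf M"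
    and min: "\<And>\<epsilon>. 0 < \<epsilon> \<Longrightarrow> \<epsilon> < 1 \<Longrightarrow> (\<integral>x. (w x)\<^sup>2 \<partial>M) \<le> (\<integral>x. (w x + \<epsilon> * h x)\<^sup>2 \<partial>M)"
  shows "0 \<le> (\<integral>x. w x * h x \<partial>M)"
proof -
  define A where "A = (\<integral>x. w x * h x \<partial>M)"
  define H where "H = (\<integral>x. (h x)\<^sup>2 \<partial>M)"
  have integrable: "integrable M (\<lambda>x. (w x)\<^sup>2)" "integrable M (\<lambda>x. w x * h x)" "integrable M (\<lambda>x. (h x)\<^sup>2)"
    using assms(1,2) by (auto intro!: integrable_Linf Linf_mult Linf_power2)
  have "(\<integral>x. (w x + \<epsilon> * h x)\<^sup>2 \<partial>M) = (\<integral>x. (w x)\<^sup>2 \<partial>M) + \<epsilon> * (2 * A + \<epsilon> * H)" for \<epsilon>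
  proof -
    have "(\<integral>x. (w x + \<epsilon> * h x)\<^sup>2 \<partial>M)
        = (\<integral>x. (w x)\<^sup>2 + (2 * \<epsilon>) * (w x * h x) + \<epsilon>\<^sup>2 * (h x)\<^sup>2 \<partial>M)"
      by (simp add: power2_eq_square algebra_simps)
    also have "\<dots> = (\<integral>x. (w x)\<^sup>2 \<partial>M) + (2 * \<epsilon>) * A + \<epsilon>\<^sup>2 * H"
      using integrable by (simp add: A_def H_def)
    finally show ?thesis
      by (simp add: power2_eq_square algebra_simps)
  qed
  then have "0 \<le> 2 * A + \<epsilon> * H" if "0 < \<epsilon>" "\<epsilon> < 1" for \<epsilon>
    using min[OF that] that by (simp add: zero_le_mult_iff)
  then have "eventually (\<lambda>\<epsilon>. 0 \<le> 2 * A + \<epsilon> * H) (at_right 0)"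
    by (intro eventually_at_rightI[of 0 1]) auto
  moreover have "((\<lambda>\<epsilon>. 2 * A + \<epsilon> * H) \<longlongrightarrow> 2 * A) (at_right 0)"
    by (auto intro!: tendsto_eq_intros)
  ultimately have "0 \<le> 2 * A"
    by (intro tendsto_lowerbound) auto
  then show ?thesis
    by (simp add: A_def)
qed

section \<open>Linear combinations and sums of their squares\<close>

definition lincomb :: "nat \<Rightarrow> (nat \<Rightarrow> 'a \<Rightarrow> real) \<Rightarrow> (nat \<Rightarrow> real) \<Rightarrow> 'a \<Rightarrow> real" where
  "lincomb m B c = (\<lambda>x. \<Sum>a<m. c a * B a x)"

lemma fspan_eq_range_lincomb: "fspan n b = range (lincomb n b)"
  by (auto simp: fspan_def lincomb_def)

lemma lincomb_Suc: "lincomb (Suc m) B c x = lincomb m B c x + c m * B m x"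
  by (simp add: lincomb_def)

lemma lincomb_cong: "(\<And>a. a < m \<Longrightarrow> c a = c' a) \<Longrightarrow> lincomb m B c = lincomb m B c'"
  unfolding lincomb_def by (intro ext sum.cong) auto

lemma lincomb_truncate: "lincomb m B (\<lambda>a. if a < m then c a else 0) = lincomb m B c"
  by (rule lincomb_cong) simp

lemma lincomb_add: "lincomb m B (\<lambda>a. c a + d a) x = lincomb m B c x + lincomb m B d x"
  by (simp add: lincomb_def sum.distrib distrib_right)

lemma lincomb_scale: "lincomb m B (\<lambda>a. t * c a) x = t * lincomb m B c x"
  by (simp add: lincomb_def sum_distrib_left mult.assoc)

lemma lincomb_zero [simp]: "lincomb m B (\<lambda>a. 0) x = 0"
  by (simp add: lincomb_def)

lemma Linf_lincomb: "(\<And>a. a < m \<Longrightarrow> B a \<in> Linf M) \<Longrightarrow> lincomb m B c \<in> Linf M"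
  unfolding lincomb_def by (intro Linf_sum Linf_mult Linf_const) auto

lemma abs_lincomb_le:
  assumes "\<And>a. a < m \<Longrightarrow> \<bar>B a x\<bar> \<le> C" and "\<And>a. a < m \<Longrightarrow> \<bar>c a\<bar> \<le> R"
  shows "\<bar>lincomb m B c x\<bar> \<le> m * (R * C)"
proof -
  have "\<bar>lincomb m B c x\<bar> \<le> (\<Sum>a<m. \<bar>c a\<bar> * \<bar>B a x\<bar>)"
    unfolding lincomb_def abs_mult[symmetric] by (rule sum_abs)
  also have "\<dots> \<le> (\<Sum>a<m. R * C)"
    using assms by (intro sum_mono mult_mono) (auto intro: order_trans[OF abs_ge_zero])
  finally show ?thesis
    by simp
qed

lemma fspan_subset_Linf: "(\<And>j. j < n \<Longrightarrow> b j \<in> Linf M) \<Longrightarrow> fspan n b \<subseteq> Linf M"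
  by (auto simp: fspan_eq_range_lincomb intro: Linf_lincomb)

(* For alpha = 0 all d j vanish, so Y = 0 and the divisions by 0 are harmless. *)
lemma sum_squares_complete_square:
  fixes L d :: "'j \<Rightarrow> real"
  assumes "finite J"
  defines "\<alpha> \<equiv> \<Sum>j\<in>J. (d j)\<^sup>2" and "Y \<equiv> \<Sum>j\<in>J. d j * L j"
  shows "(\<Sum>j\<in>J. (L j + d j * z)\<^sup>2)
    = (\<Sum>j\<in>J. (L j - d j * (Y / \<alpha>))\<^sup>2) + (sqrt \<alpha> * z + Y / sqrt \<alpha>)\<^sup>2"
proof -
  have expand: "(\<Sum>j\<in>J. (L j + d j * t)\<^sup>2) = (\<Sum>j\<in>J. (L j)\<^sup>2) + 2 * t * Y + t\<^sup>2 * \<alpha>" for t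
  proof -
    have "(L j + d j * t)\<^sup>2 = (L j)\<^sup>2 + 2 * t * (d j * L j) + t\<^sup>2 * (d j)\<^sup>2" for j
      by (simp add: power2_eq_square algebra_simps)
    then show ?thesis
      by (simp add: sum.distrib Y_def \<alpha>_def sum_distrib_left)
  qed
  have "\<alpha> \<ge> 0"
    by (simp add: \<alpha>_def sum_nonneg)
  moreover have "\<alpha> = 0 \<Longrightarrow> Y = 0"
    using \<open>finite J\<close> by (simp add: \<alpha>_def Y_def sum_nonneg_eq_0_iff)
  ultimately have "(sqrt \<alpha> * z + Y / sqrt \<alpha>)\<^sup>2 = \<alpha> * z\<^sup>2 + 2 * z * Y + Y\<^sup>2 / \<alpha>"
    by (cases "\<alpha> = 0") (simp_all add: power2_sum power_mult_distrib power_divide)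
  moreover have "(\<Sum>j\<in>J. (L j - d j * (Y / \<alpha>))\<^sup>2) = (\<Sum>j\<in>J. (L j + d j * (- Y / \<alpha>))\<^sup>2)"
    by simp
  ultimately show ?thesis
    unfolding expand by (simp add: power2_eq_square)
qed

text \<open>Complete the square in the last variable; what remains is the squared norm of the
  projection of the vector of forms orthogonally to its last coefficient column, a sum of
  squares in one variable less.\<close>
lemma sum_squares_lincomb_reduce:
  fixes c :: "'j \<Rightarrow> nat \<Rightarrow> real"
  assumes "finite J"
  shows "\<exists>e. \<forall>x. (\<Sum>j\<in>J. (lincomb m B (c j) x)\<^sup>2) = (\<Sum>i<m. (lincomb m B (e i) x)\<^sup>2)"
proof (induction m arbitrary: c)
  case 0
  then show ?case
    by (simp add: lincomb_def)
next
  case (Suc m)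
  define \<alpha> where "\<alpha> = (\<Sum>j\<in>J. (c j m)\<^sup>2)"
  define \<beta> where "\<beta> a = (\<Sum>j\<in>J. c j m * c j a)" for a
  obtain e where e: "\<And>x. (\<Sum>j\<in>J. (lincomb m B (\<lambda>a. c j a - c j m * (\<beta> a / \<alpha>)) x)\<^sup>2)
      = (\<Sum>i<m. (lincomb m B (e i) x)\<^sup>2)"
    using Suc.IH[of "\<lambda>j a. c j a - c j m * (\<beta> a / \<alpha>)"] by blast
  define e' where "e' i = (if i < m then (e i)(m := 0) else (\<lambda>a. if a = m then sqrt \<alpha> else \<beta> a / sqrt \<alpha>))"
    for i
  have "(\<Sum>j\<in>J. (lincomb (Suc m) B (c j) x)\<^sup>2) = (\<Sum>i<Suc m. (lincomb (Suc m) B (e' i) x)\<^sup>2)" for x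
  proof -
    have \<beta>: "lincomb m B \<beta> x = (\<Sum>j\<in>J. c j m * lincomb m B (c j) x)"
      by (simp add: \<beta>_def lincomb_def sum_distrib_left sum_distrib_right mult.assoc
          flip: sum.swap[of _ J])
    have "lincomb m B (\<lambda>a. c j a - c j m * (\<beta> a / \<alpha>)) x
        = lincomb m B (c j) x - c j m * (lincomb m B \<beta> x / \<alpha>)" for j
      by (simp add: lincomb_def sum_distrib_left sum_divide_distrib sum_subtractf algebra_simps)
    then have "(\<Sum>i<m. (lincomb m B (e' i) x)\<^sup>2)
        = (\<Sum>j\<in>J. (lincomb m B (c j) x - c j m * (lincomb m B \<beta> x / \<alpha>))\<^sup>2)"
      by (simp add: e'_def lincomb_cong[of m "(e _)(m := 0)"] flip: e)
    moreover have "lincomb (Suc m) B (e' m) x = sqrt \<alpha> * B m x + lincomb m B \<beta> x / sqrt \<alpha>"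
      by (simp add: e'_def lincomb_Suc lincomb_def sum_divide_distrib)
    moreover have "e' i m = 0" if "i < m" for i
      using that by (simp add: e'_def)
    ultimately show ?thesis
      using sum_squares_complete_square[OF \<open>finite J\<close>, of "\<lambda>j. lincomb m B (c j) x" "\<lambda>j. c j m" "B m x"]
      by (simp add: lincomb_Suc \<beta> \<alpha>_def)
  qed
  then show ?case
    by blast
qed

lemma compact_Pi_UNIV:
  fixes S :: "'i \<Rightarrow> 'b::topological_space set"
  assumes "\<And>i. compact (S i)"
  shows "compact (Pi UNIV S)"
proof -
  have "compactin (product_topology (\<lambda>i. euclidean) UNIV) (PiE UNIV S)"
    using assms by (subst compactin_PiE) auto
  then show ?thesis
    by (simp add: euclidean_product_topology PiE_UNIV_domain)
qed

lemma continuous_on_coordinate [continuous_intros]: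
  "continuous_on S (\<lambda>c :: 'i \<Rightarrow> 'b::topological_space. c a)"
  by (rule continuous_on_subset[OF continuous_on_product_coordinates]) simp

lemma continuous_on_coordinate2 [continuous_intros]:
  "continuous_on S (\<lambda>d :: 'i \<Rightarrow> 'j \<Rightarrow> 'b::topological_space. d i a)"
  by (rule continuous_on_product_then_coordinatewise
      [OF continuous_on_coordinate[where 'b = "'j \<Rightarrow> 'b"]])

lemma continuous_on_integral_dominated:
  fixes f :: "'p::metric_space \<Rightarrow> 'a \<Rightarrow> real"
  assumes "finite_measure M"
    and "\<And>p. p \<in> K \<Longrightarrow> f p \<in> borel_measurable M"
    and "AE x in M. \<forall>p\<in>K. \<bar>f p x\<bar> \<le> C"
    and "\<And>x. continuous_on K (\<lambda>p. f p x)"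
  shows "continuous_on K (\<lambda>p. \<integral>x. f p x \<partial>M)"
proof (rule continuous_on_sequentiallyI)
  fix u p
  assume u: "\<forall>n. u n \<in> K" and "p \<in> K" and "u \<longlonglongrightarrow> p"
  show "(\<lambda>n. \<integral>x. f (u n) x \<partial>M) \<longlonglongrightarrow> (\<integral>x. f p x \<partial>M)"
  proof (rule integral_dominated_convergence[where w = "\<lambda>x. C"])
    show "AE x in M. (\<lambda>n. f (u n) x) \<longlonglongrightarrow> f p x"
      using assms(4) \<open>p \<in> K\<close> u \<open>u \<longlonglongrightarrow> p\<close> by (auto simp: continuous_on_sequentially o_def)
    show "AE x in M. norm (f (u n) x) \<le> C" for n
      using assms(3) by eventually_elim (use u in auto)
  qed (use assms(1,2) \<open>p \<in> K\<close> u finite_measure.integrable_const in auto)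
qed

(* Coordinates beyond m are pinned to 0, so that the boxes are compact in the product topology. *)
definition coeff_box :: "nat \<Rightarrow> real \<Rightarrow> (nat \<Rightarrow> real) set" where
  "coeff_box m R = Pi UNIV (\<lambda>a. if a < m then {-R..R} else {0})"

definition matrix_box :: "nat \<Rightarrow> real \<Rightarrow> (nat \<Rightarrow> nat \<Rightarrow> real) set" where
  "matrix_box m R = Pi UNIV (\<lambda>i. if i < m then coeff_box m R else {\<lambda>_. 0})"

lemma compact_coeff_box: "compact (coeff_box m R)"
  unfolding coeff_box_def by (intro compact_Pi_UNIV) auto

lemma compact_matrix_box: "compact (matrix_box m R)"
  unfolding matrix_box_def by (intro compact_Pi_UNIV) (auto simp: compact_coeff_box)

lemma coeff_box_iff: "c \<in> coeff_box m R \<longleftrightarrow> (\<forall>a. if a < m then \<bar>c a\<bar> \<le> R else c a = 0)"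
  by (auto simp: coeff_box_def Pi_iff abs_le_iff split: if_splits)

lemma matrix_box_iff:
  "d \<in> matrix_box m R \<longleftrightarrow> (\<forall>i a. if i < m \<and> a < m then \<bar>d i a\<bar> \<le> R else d i a = 0)"
proof
  assume "d \<in> matrix_box m R"
  then have "d i \<in> (if i < m then coeff_box m R else {\<lambda>_. 0})" for i
    unfolding matrix_box_def by (rule Pi_mem) simp
  then show "\<forall>i a. if i < m \<and> a < m then \<bar>d i a\<bar> \<le> R else d i a = 0"
    by (metis coeff_box_iff singletonD)
qed (auto simp: matrix_box_def coeff_box_iff fun_eq_iff)

section \<open>Almost everywhere independent bases\<close>

definition ae_independent :: "'a measure \<Rightarrow> nat \<Rightarrow> (nat \<Rightarrow> 'a \<Rightarrow> real) \<Rightarrow> bool" where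
  "ae_independent M m B \<longleftrightarrow> (\<forall>c. (AE x in M. lincomb m B c x = 0) \<longrightarrow> (\<forall>a<m. c a = 0))"

definition ae_subset :: "'a measure \<Rightarrow> ('a \<Rightarrow> real) set \<Rightarrow> ('a \<Rightarrow> real) set \<Rightarrow> bool" where
  "ae_subset M E F \<longleftrightarrow> (\<forall>f\<in>E. \<exists>g\<in>F. AE x in M. f x = g x)"

lemma subset_imp_ae_subset: "E \<subseteq> F \<Longrightarrow> ae_subset M E F"
  by (auto simp: ae_subset_def)

lemma ae_subset_trans:
  assumes "ae_subset M E F" "ae_subset M F G"
  shows "ae_subset M E G"
  unfolding ae_subset_def
proof
  fix f
  assume "f \<in> E"
  then obtain g where "g \<in> F" and fg: "AE x in M. f x = g x"
    using assms(1) by (auto simp: ae_subset_def)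
  then obtain h where "h \<in> G" and gh: "AE x in M. g x = h x"
    using assms(2) by (auto simp: ae_subset_def)
  from fg gh have "AE x in M. f x = h x"
    by eventually_elim simp
  with \<open>h \<in> G\<close> show "\<exists>h\<in>G. AE x in M. f x = h x"
    by blast
qed

lemma ae_subset_fspan_iff:
  "ae_subset M (fspan n b) (fspan m B) \<longleftrightarrow> (\<forall>c. \<exists>c'. AE x in M. lincomb n b c x = lincomb m B c' x)"
  by (simp add: ae_subset_def fspan_eq_range_lincomb)

lemma fspan_subset_fspan_Suc: "fspan n b \<subseteq> fspan (Suc n) b"
proof
  fix f
  assume "f \<in> fspan n b"
  then obtain c where "f = lincomb n b c"
    by (auto simp: fspan_eq_range_lincomb)
  then have "f = lincomb (Suc n) b (c(n := 0))"
    by (simp add: fun_eq_iff lincomb_Suc lincomb_cong[of n "c(n := 0)" c])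
  then show "f \<in> fspan (Suc n) b"
    by (simp add: fspan_eq_range_lincomb)
qed

lemma lincomb_Suc_upd: "lincomb (Suc m) (B(m := f)) c x = lincomb m B c x + c m * f x"
  by (simp add: lincomb_Suc lincomb_def)

lemma ae_subset_fspan_append:
  assumes "ae_subset M (fspan n b) (fspan m B)"
  shows "ae_subset M (fspan (Suc n) (b(n := f))) (fspan (Suc m) (B(m := f)))"
  unfolding ae_subset_fspan_iff
proof
  fix c
  obtain c' where "AE x in M. lincomb n b c x = lincomb m B c' x"
    using assms by (auto simp: ae_subset_fspan_iff)
  then have "AE x in M. lincomb (Suc n) (b(n := f)) c x = lincomb (Suc m) (B(m := f)) (c'(m := c n)) x"
    by eventually_elim (simp add: lincomb_Suc_upd lincomb_cong[of m "c'(m := c n)" c'])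
  then show "\<exists>c'. AE x in M. lincomb (Suc n) (b(n := f)) c x = lincomb (Suc m) (B(m := f)) c' x"
    by blast
qed

lemma ae_independent_extend:
  assumes indep: "ae_independent M m B" and not_in_span: "\<nexists>d. AE x in M. f x = lincomb m B d x"
  shows "ae_independent M (Suc m) (B(m := f))"
  unfolding ae_independent_def
proof (intro allI, rule impI)
  fix c
  assume zero: "AE x in M. lincomb (Suc m) (B(m := f)) c x = 0"
  have "c m = 0"
  proof (rule ccontr)
    assume "c m \<noteq> 0"
    from zero have "AE x in M. f x = (- 1 / c m) * lincomb m B c x"
      by eventually_elim (use \<open>c m \<noteq> 0\<close> in \<open>simp add: lincomb_Suc_upd field_simps\<close>)
    then have "AE x in M. f x = lincomb m B (\<lambda>a. (- 1 / c m) * c a) x"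
      by (simp only: lincomb_scale)
    with not_in_span show False
      by blast
  qed
  with zero have "AE x in M. lincomb m B c x = 0"
    by (simp add: lincomb_Suc_upd)
  with indep \<open>c m = 0\<close> show "\<forall>a<Suc m. c a = 0"
    by (auto simp: ae_independent_def less_Suc_eq)
qed

lemma ae_subset_fspan_Suc_if_ae_in_span:
  assumes "ae_subset M (fspan n b) (fspan m B)" and d: "AE x in M. b n x = lincomb m B d x"
  shows "ae_subset M (fspan (Suc n) b) (fspan m B)"
  unfolding ae_subset_fspan_iff
proof
  fix c
  obtain c' where "AE x in M. lincomb n b c x = lincomb m B c' x"
    using assms(1) by (auto simp: ae_subset_fspan_iff)
  with d have "AE x in M. lincomb (Suc n) b c x = lincomb m B (\<lambda>a. c' a + c n * d a) x"
    by eventually_elim (simp add: lincomb_Suc lincomb_add lincomb_scale)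
  then show "\<exists>c'. AE x in M. lincomb (Suc n) b c x = lincomb m B c' x"
    by blast
qed

lemma exists_ae_independent_basis:
  assumes "\<And>j. j < n \<Longrightarrow> b j \<in> Linf M"
  shows "\<exists>m B. (\<forall>a<m. B a \<in> Linf M) \<and> ae_independent M m B
    \<and> ae_subset M (fspan n b) (fspan m B) \<and> ae_subset M (fspan m B) (fspan n b)"
  using assms
proof (induction n)
  case 0
  show ?case
    by (intro exI[of _ 0] exI[of _ b]) (auto simp: ae_independent_def intro: subset_imp_ae_subset)
next
  case (Suc n)
  then obtain m B where B: "\<forall>a<m. B a \<in> Linf M" "ae_independent M m B"
    and to_B: "ae_subset M (fspan n b) (fspan m B)" and from_B: "ae_subset M (fspan m B) (fspan n b)"
    by auto
  show ?case
  proof (cases "\<exists>d. AE x in M. b n x = lincomb m B d x")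
    case True
    then obtain d where "AE x in M. b n x = lincomb m B d x"
      by blast
    with to_B have "ae_subset M (fspan (Suc n) b) (fspan m B)"
      by (rule ae_subset_fspan_Suc_if_ae_in_span)
    moreover have "ae_subset M (fspan m B) (fspan (Suc n) b)"
      by (rule ae_subset_trans[OF from_B subset_imp_ae_subset[OF fspan_subset_fspan_Suc]])
    ultimately show ?thesis
      using B by blast
  next
    case False
    then have "ae_independent M (Suc m) (B(m := b n))"
      using B(2) ae_independent_extend by blast
    moreover have "\<forall>a<Suc m. (B(m := b n)) a \<in> Linf M"
      using B(1) Suc.prems by (auto simp: less_Suc_eq)
    moreover have "ae_subset M (fspan (Suc n) b) (fspan (Suc m) (B(m := b n)))"
      using ae_subset_fspan_append[OF to_B, of "b n"] by simp
    moreover have "ae_subset M (fspan (Suc m) (B(m := b n))) (fspan (Suc n) b)"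
      using ae_subset_fspan_append[OF from_B, of "b n"] by simp
    ultimately show ?thesis
      by blast
  qed
qed

definition unit_sum_of_squares :: "'a measure \<Rightarrow> ('a \<Rightarrow> real) set \<Rightarrow> bool" where
  "unit_sum_of_squares M E \<longleftrightarrow> (\<exists>(k::nat) fs. (\<forall>j<k. fs j \<in> E) \<and> (AE x in M. (\<Sum>j<k. (fs j x)\<^sup>2) = 1))"

definition positive_definite_on :: "'a measure \<Rightarrow> ('a \<Rightarrow> real) set \<Rightarrow> (('a \<Rightarrow> real) \<Rightarrow> real) \<Rightarrow> bool" where
  "positive_definite_on M E Q \<longleftrightarrow> (\<forall>f\<in>E. nonzero_ae M f \<longrightarrow> 0 < Q f)"

lemma unit_sum_of_squares_ae_subset:
  assumes "ae_subset M E F" "unit_sum_of_squares M E"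
  shows "unit_sum_of_squares M F"
proof -
  obtain k :: nat and fs where fs: "\<forall>j<k. fs j \<in> E" and one: "AE x in M. (\<Sum>j<k. (fs j x)\<^sup>2) = 1"
    using assms(2) by (auto simp: unit_sum_of_squares_def)
  have "\<forall>j. \<exists>g. j < k \<longrightarrow> g \<in> F \<and> (AE x in M. fs j x = g x)"
    using assms(1) fs by (auto simp: ae_subset_def)
  then obtain gs where gs: "\<And>j. j < k \<Longrightarrow> gs j \<in> F \<and> (AE x in M. fs j x = gs j x)"
    by metis
  have "AE x in M. \<forall>j\<in>{..<k}. fs j x = gs j x"
    using gs by (intro eventually_ball_finite) auto
  with one have "AE x in M. (\<Sum>j<k. (gs j x)\<^sup>2) = 1"
    by eventually_elim simp
  with gs show ?thesis
    unfolding unit_sum_of_squares_def by blast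
qed

lemma quad_form_cong_AE:
  assumes "u \<in> borel_measurable M" "f \<in> borel_measurable M" "g \<in> borel_measurable M"
    and "AE x in M. f x = g x"
  shows "quad_form M u f = quad_form M u g"
  unfolding quad_form_def using assms by (intro integral_cong_AE) auto

lemma positive_definite_on_ae_subset:
  assumes "ae_subset M E F" "positive_definite_on M F (quad_form M u)"
    and "u \<in> borel_measurable M" "E \<subseteq> borel_measurable M" "F \<subseteq> borel_measurable M"
  shows "positive_definite_on M E (quad_form M u)"
  unfolding positive_definite_on_def
proof (intro ballI impI)
  fix f
  assume "f \<in> E" "nonzero_ae M f"
  then obtain g where "g \<in> F" and fg: "AE x in M. f x = g x"
    using assms(1) by (auto simp: ae_subset_def)
  have "nonzero_ae M g"
  proof (unfold nonzero_ae_def, rule notI)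
    assume "AE x in M. g x = 0"
    with fg have "AE x in M. f x = 0"
      by eventually_elim simp
    with \<open>nonzero_ae M f\<close> show False
      by (simp add: nonzero_ae_def)
  qed
  with assms(2) \<open>g \<in> F\<close> have "0 < quad_form M u g"
    by (simp add: positive_definite_on_def)
  also have "quad_form M u g = quad_form M u f"
    using assms(3-5) \<open>f \<in> E\<close> \<open>g \<in> F\<close> fg by (intro quad_form_cong_AE) (auto elim: AE_mp)
  finally show "0 < quad_form M u f" .
qed

lemma sum_eq_0_nonpos_nonneg:
  fixes q :: "'j \<Rightarrow> real"
  assumes "finite J" "J \<noteq> {}" "sum q J = 0"
  shows "\<exists>j\<in>J. q j \<le> 0" and "\<exists>j\<in>J. 0 \<le> q j"
  using sum_pos[OF assms(1,2), of q] sum_pos[OF assms(1,2), of "\<lambda>j. - q j"] assms(3)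
  by (force simp: sum_negf)+

lemma (in finite_measure) sum_quad_form_eq_integral:
  assumes u: "u \<in> Linf M" and fs: "\<And>j. j < k \<Longrightarrow> fs j \<in> Linf M"
    and one: "AE x in M. (\<Sum>j<k. (fs j x)\<^sup>2) = 1"
  shows "(\<Sum>j<k. quad_form M u (fs j)) = (\<integral>x. u x \<partial>M)"
proof -
  have "(\<Sum>j<k. quad_form M u (fs j)) = (\<integral>x. (\<Sum>j<k. u x * (fs j x)\<^sup>2) \<partial>M)"
    unfolding quad_form_def
    by (rule Bochner_Integration.integral_sum[symmetric])
      (auto intro!: integrable_Linf Linf_mult Linf_power2 u fs)
  also have "\<dots> = (\<integral>x. u x \<partial>M)"
    using one
    by (intro integral_cong_AE)
      (auto simp flip: sum_distrib_left intro!: Linf_measurable Linf_sum Linf_mult Linf_power2 u fs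
        elim!: eventually_mono)
  finally show ?thesis .
qed

lemma (in finite_measure) indefinite_if_unit_sum_of_squares:
  assumes "emeasure M (space M) > 0" "E \<subseteq> Linf M" "unit_sum_of_squares M E" "u \<in> Linf_star M"
  shows "indefinite_on M E (quad_form M u)"
proof -
  obtain k :: nat and fs where fs: "\<forall>j<k. fs j \<in> E" and one: "AE x in M. (\<Sum>j<k. (fs j x)\<^sup>2) = 1"
    using assms(3) by (auto simp: unit_sum_of_squares_def)
  have u: "u \<in> Linf M" "(\<integral>x. u x \<partial>M) = 0"
    using assms(4) by (auto simp: Linf_star_def)
  have "fs j \<in> Linf M" if "j < k" for j
    using assms(2) fs that by blast
  with u have "(\<Sum>j<k. quad_form M u (fs j)) = 0"
    using sum_quad_form_eq_integral[OF u(1) _ one] by simp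
  define J where "J = {j. j < k \<and> nonzero_ae M (fs j)}"
  have "quad_form M u (fs j) = 0" if "j < k" "j \<notin> J" for j
  proof -
    from that have "AE x in M. fs j x = 0"
      by (simp add: J_def nonzero_ae_def)
    then have "AE x in M. u x * (fs j x)\<^sup>2 = 0"
      by eventually_elim simp
    then show ?thesis
      unfolding quad_form_def by (rule integral_eq_zero_AE)
  qed
  then have "(\<Sum>j\<in>J. quad_form M u (fs j)) = (\<Sum>j<k. quad_form M u (fs j))"
    by (intro sum.mono_neutral_left) (auto simp: J_def)
  with \<open>(\<Sum>j<k. quad_form M u (fs j)) = 0\<close> have sum_J: "(\<Sum>j\<in>J. quad_form M u (fs j)) = 0"
    by simp
  have "J \<noteq> {}"
  proof
    assume "J = {}"
    then have "AE x in M. \<forall>j\<in>{..<k}. fs j x = 0"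
      by (intro eventually_ball_finite) (auto simp: J_def nonzero_ae_def)
    with one have "AE x in M. False"
      by eventually_elim simp
    with assms(1) show False
      by (simp add: ae_filter_eq_bot_iff flip: trivial_limit_def)
  qed
  then show ?thesis
    using sum_eq_0_nonpos_nonneg[OF _ _ sum_J] fs
    unfolding indefinite_on_def by (auto simp: J_def)
qed

section \<open>A positive definite weight from the nearest sum of squares\<close>

locale ae_basis = finite_measure M for M :: "'a measure" +
  fixes m :: nat and B :: "nat \<Rightarrow> 'a \<Rightarrow> real"
  assumes Linf_basis: "\<And>a. a < m \<Longrightarrow> B a \<in> Linf M"
    and independent: "ae_independent M m B"
begin

definition sqnorm :: "(nat \<Rightarrow> real) \<Rightarrow> real" where
  "sqnorm c = (\<integral>x. (lincomb m B c x)\<^sup>2 \<partial>M)"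

definition sos :: "(nat \<Rightarrow> nat \<Rightarrow> real) \<Rightarrow> 'a \<Rightarrow> real" where
  "sos d x = (\<Sum>i<m. (lincomb m B (d i) x)\<^sup>2)"

lemma Linf_lincomb_basis: "lincomb m B c \<in> Linf M"
  by (rule Linf_lincomb[OF Linf_basis])

lemma Linf_sos: "sos d \<in> Linf M"
  unfolding sos_def by (intro Linf_sum Linf_power2 Linf_lincomb_basis)

lemma integrable_square_lincomb: "integrable M (\<lambda>x. (lincomb m B c x)\<^sup>2)"
  by (intro integrable_Linf Linf_power2 Linf_lincomb_basis)

lemma sqnorm_nonneg: "0 \<le> sqnorm c"
  by (simp add: sqnorm_def)

lemma sqnorm_scale: "sqnorm (\<lambda>a. t * c a) = t\<^sup>2 * sqnorm c"
  by (simp add: sqnorm_def lincomb_scale power_mult_distrib)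

lemma sqnorm_pos_iff: "0 < sqnorm c \<longleftrightarrow> nonzero_ae M (lincomb m B c)"
  unfolding sqnorm_def by (rule integral_power2_pos_iff[OF Linf_lincomb_basis])

lemma nonzero_ae_lincomb: "\<exists>a<m. c a \<noteq> 0 \<Longrightarrow> nonzero_ae M (lincomb m B c)"
  using independent by (auto simp: ae_independent_def nonzero_ae_def)

lemma integral_sos: "(\<integral>x. sos d x \<partial>M) = (\<Sum>i<m. sqnorm (d i))"
  unfolding sos_def sqnorm_def by (intro Bochner_Integration.integral_sum integrable_square_lincomb)

lemma sos_truncate: "sos (\<lambda>i a. if i < m \<and> a < m then d i a else 0) = sos d"
  unfolding sos_def by (intro ext sum.cong refl) (simp add: lincomb_def)

lemma lincomb_bounded_on_coeff_box: "\<exists>K. AE x in M. \<forall>c\<in>coeff_box m R. \<bar>lincomb m B c x\<bar> \<le> K"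
proof -
  obtain C where "AE x in M. \<forall>a<m. \<bar>B a x\<bar> \<le> C"
    using Linf_common_bound Linf_basis by blast
  then have "AE x in M. \<forall>c\<in>coeff_box m R. \<bar>lincomb m B c x\<bar> \<le> m * (R * C)"
    by eventually_elim (auto intro!: abs_lincomb_le simp: coeff_box_iff split: if_splits)
  then show ?thesis
    by blast
qed

lemma continuous_on_sqnorm: "continuous_on (coeff_box m R) sqnorm"
proof -
  obtain K where K: "AE x in M. \<forall>c\<in>coeff_box m R. \<bar>lincomb m B c x\<bar> \<le> K"
    using lincomb_bounded_on_coeff_box by blast
  show ?thesis
    unfolding sqnorm_def
  proof (rule continuous_on_integral_dominated[where C = "K\<^sup>2"])
    show "AE x in M. \<forall>c\<in>coeff_box m R. \<bar>(lincomb m B c x)\<^sup>2\<bar> \<le> K\<^sup>2"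
      using K by eventually_elim (auto intro: power2_le_of_abs_le)
    show "continuous_on (coeff_box m R) (\<lambda>c. (lincomb m B c x)\<^sup>2)" for x
      unfolding lincomb_def by (intro continuous_intros)
  qed (auto intro: finite_measure_axioms Linf_measurable Linf_power2 Linf_lincomb_basis)
qed

lemma exists_min_sqnorm_on_unit_sphere:
  assumes "m > 0"
  shows "\<exists>c0. 0 < sqnorm c0 \<and> (\<forall>c. (\<Sum>a<m. (c a)\<^sup>2) = 1 \<longrightarrow> sqnorm c0 \<le> sqnorm c)"
proof -
  define S where "S = coeff_box m 1 \<inter> {c. (\<Sum>a<m. (c a)\<^sup>2) = 1}"
  have "compact S"
    unfolding S_def by (intro compact_Int_closed compact_coeff_box closed_Collect_eq continuous_intros)
  have unit_in_S: "(\<lambda>a. if a < m then c a else 0) \<in> S" if "(\<Sum>a<m. (c a)\<^sup>2) = 1" for c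
  proof -
    have "(c a)\<^sup>2 \<le> 1" if "a < m" for a
      using member_le_sum[of a "{..<m}" "\<lambda>a. (c a)\<^sup>2"] that \<open>(\<Sum>a<m. (c a)\<^sup>2) = 1\<close> by simp
    then show ?thesis
      using that by (auto simp: S_def coeff_box_iff abs_square_le_1)
  qed
  have "(\<lambda>a. if a < m then if a = 0 then 1 else 0 else 0) \<in> S"
    using assms by (intro unit_in_S) (auto simp: if_distrib[of "\<lambda>t. t\<^sup>2"] cong: if_cong)
  then have "S \<noteq> {}"
    by blast
  moreover have "continuous_on S sqnorm"
    using continuous_on_sqnorm[of 1] by (rule continuous_on_subset) (simp add: S_def)
  ultimately obtain c0 where "c0 \<in> S" and c0_min: "\<And>c. c \<in> S \<Longrightarrow> sqnorm c0 \<le> sqnorm c"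
    using continuous_attains_inf[OF \<open>compact S\<close>] by blast
  have "\<exists>a<m. c0 a \<noteq> 0"
  proof (rule ccontr)
    assume "\<not> (\<exists>a<m. c0 a \<noteq> 0)"
    then have "(\<Sum>a<m. (c0 a)\<^sup>2) = 0"
      by simp
    with \<open>c0 \<in> S\<close> show False
      by (simp add: S_def)
  qed
  then have "0 < sqnorm c0"
    by (simp add: sqnorm_pos_iff nonzero_ae_lincomb)
  moreover have "sqnorm c0 \<le> sqnorm c" if "(\<Sum>a<m. (c a)\<^sup>2) = 1" for c
    using c0_min[OF unit_in_S[OF that]] by (simp add: sqnorm_def lincomb_truncate)
  ultimately show ?thesis
    by blast
qed

lemma sqnorm_coercive: "\<exists>l>0. \<forall>c. l * (\<Sum>a<m. (c a)\<^sup>2) \<le> sqnorm c"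
proof (cases "m = 0")
  case True
  have "1 * (\<Sum>a<m. (c a)\<^sup>2) \<le> sqnorm c" for c
    using sqnorm_nonneg[of c] by (simp add: True)
  then show ?thesis
    by (intro exI[of _ 1]) simp
next
  case False
  then obtain c0 where "0 < sqnorm c0"
    and c0_min: "\<And>c. (\<Sum>a<m. (c a)\<^sup>2) = 1 \<Longrightarrow> sqnorm c0 \<le> sqnorm c"
    using exists_min_sqnorm_on_unit_sphere by blast
  have "sqnorm c0 * (\<Sum>a<m. (c a)\<^sup>2) \<le> sqnorm c" for c
  proof (cases "(\<Sum>a<m. (c a)\<^sup>2) = 0")
    case False
    define t where "t = (\<Sum>a<m. (c a)\<^sup>2)"
    have "0 < t"
      using False by (simp add: t_def order_le_neq_trans[OF sum_nonneg])
    have "(\<Sum>a<m. ((1 / sqrt t) * c a)\<^sup>2) = 1"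
      using \<open>0 < t\<close> by (simp add: power_mult_distrib power_divide t_def flip: sum_divide_distrib)
    then have "sqnorm c0 \<le> sqnorm (\<lambda>a. (1 / sqrt t) * c a)"
      by (rule c0_min)
    also have "\<dots> = sqnorm c / t"
      using \<open>0 < t\<close> unfolding sqnorm_scale by (simp add: power_divide)
    finally show ?thesis
      using \<open>0 < t\<close> by (simp add: t_def field_simps)
  qed (simp add: sqnorm_nonneg)
  with \<open>0 < sqnorm c0\<close> show ?thesis
    by blast
qed

lemma sos_bounded_on_matrix_box: "\<exists>K. AE x in M. \<forall>d\<in>matrix_box m R. \<bar>sos d x\<bar> \<le> K"
proof -
  obtain K where K: "AE x in M. \<forall>c\<in>coeff_box m R. \<bar>lincomb m B c x\<bar> \<le> K"
    using lincomb_bounded_on_coeff_box by blast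
  have row: "d i \<in> coeff_box m R" if "d \<in> matrix_box m R" "i < m" for d i
    using that by (auto simp: matrix_box_iff coeff_box_iff)
  from K have "AE x in M. \<forall>d\<in>matrix_box m R. \<bar>sos d x\<bar> \<le> m * K\<^sup>2"
  proof eventually_elim
    case (elim x)
    show ?case
    proof
      fix d
      assume "d \<in> matrix_box m R"
      then have "(lincomb m B (d i) x)\<^sup>2 \<le> K\<^sup>2" if "i < m" for i
        using elim row[OF _ that] by (auto intro: power2_le_of_abs_le)
      then have "sos d x \<le> (\<Sum>i<m. K\<^sup>2)"
        unfolding sos_def by (intro sum_mono) auto
      then show "\<bar>sos d x\<bar> \<le> m * K\<^sup>2"
        by (simp add: sos_def sum_nonneg)
    qed
  qed
  then show ?thesis
    by blast
qed

lemma continuous_on_integral_sos: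
  "continuous_on (matrix_box m R) (\<lambda>d. \<integral>x. sos d x \<partial>M)"
  "continuous_on (matrix_box m R) (\<lambda>d. \<integral>x. (sos d x - k)\<^sup>2 \<partial>M)"
proof -
  obtain K where K: "AE x in M. \<forall>d\<in>matrix_box m R. \<bar>sos d x\<bar> \<le> K"
    using sos_bounded_on_matrix_box by blast
  have cont: "continuous_on (matrix_box m R) (\<lambda>d. sos d x)" for x
    unfolding sos_def lincomb_def by (intro continuous_intros)
  show "continuous_on (matrix_box m R) (\<lambda>d. \<integral>x. sos d x \<partial>M)"
    using K cont by (intro continuous_on_integral_dominated[where C = K])
      (auto intro: finite_measure_axioms Linf_measurable Linf_sos)
  have "AE x in M. \<forall>d\<in>matrix_box m R. \<bar>(sos d x - k)\<^sup>2\<bar> \<le> (K + \<bar>k\<bar>)\<^sup>2"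
    using K by eventually_elim (auto intro!: power2_le_of_abs_le order_trans[OF abs_triangle_ineq4])
  then show "continuous_on (matrix_box m R) (\<lambda>d. \<integral>x. (sos d x - k)\<^sup>2 \<partial>M)"
    using cont by (intro continuous_on_integral_dominated[where C = "(K + \<bar>k\<bar>)\<^sup>2"])
      (auto intro!: continuous_intros finite_measure_axioms Linf_measurable Linf_power2 Linf_diff Linf_sos
        Linf_const)
qed

lemma normalized_sos_in_matrix_box:
  "\<exists>R. \<forall>d. (\<integral>x. sos d x \<partial>M) = 1 \<longrightarrow> (\<lambda>i a. if i < m \<and> a < m then d i a else 0) \<in> matrix_box m R"
proof -
  obtain l where "0 < l" and l: "\<And>c. l * (\<Sum>a<m. (c a)\<^sup>2) \<le> sqnorm c"
    using sqnorm_coercive by blast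
  have "\<bar>d i a\<bar> \<le> sqrt (1 / l)" if "(\<integral>x. sos d x \<partial>M) = 1" "i < m" "a < m" for d i a
  proof -
    have "l * (d i a)\<^sup>2 \<le> l * (\<Sum>a<m. (d i a)\<^sup>2)"
      using \<open>0 < l\<close> \<open>a < m\<close> by (intro mult_left_mono member_le_sum) auto
    also have "\<dots> \<le> sqnorm (d i)"
      by (rule l)
    also have "\<dots> \<le> (\<Sum>i<m. sqnorm (d i))"
      using \<open>i < m\<close> by (intro member_le_sum sqnorm_nonneg) auto
    also have "\<dots> = 1"
      using that(1) by (simp add: integral_sos)
    finally have "(d i a)\<^sup>2 \<le> 1 / l"
      using \<open>0 < l\<close> by (simp add: field_simps)
    then show ?thesis
      using real_sqrt_le_mono by fastforce
  qed
  then show ?thesis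
    by (auto simp: matrix_box_iff)
qed

lemma exists_normalized_sos:
  assumes "m > 0"
  shows "\<exists>d. (\<integral>x. sos d x \<partial>M) = 1"
proof -
  define c :: "nat \<Rightarrow> real" where "c a = (if a = 0 then 1 else 0)" for a
  have "0 < sqnorm c"
    using assms by (auto simp: sqnorm_pos_iff c_def intro!: nonzero_ae_lincomb)
  define c' where "c' = (\<lambda>a. (1 / sqrt (sqnorm c)) * c a)"
  have "sqnorm c' = 1"
    using \<open>0 < sqnorm c\<close> unfolding c'_def sqnorm_scale by (simp add: power_divide)
  define d :: "nat \<Rightarrow> nat \<Rightarrow> real" where "d i = (if i = 0 then c' else (\<lambda>a. 0))" for i
  have "sos d x = (\<Sum>i\<in>{0}. (lincomb m B (d i) x)\<^sup>2)" for x
    unfolding sos_def using assms by (intro sum.mono_neutral_right) (auto simp: d_def)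
  then have "(\<integral>x. sos d x \<partial>M) = sqnorm c'"
    by (simp add: sqnorm_def d_def)
  with \<open>sqnorm c' = 1\<close> show ?thesis
    by auto
qed

lemma exists_nearest_normalized_sos:
  assumes "m > 0"
  shows "\<exists>d. (\<integral>x. sos d x \<partial>M) = 1 \<and>
    (\<forall>e. (\<integral>x. sos e x \<partial>M) = 1 \<longrightarrow> (\<integral>x. (sos d x - k)\<^sup>2 \<partial>M) \<le> (\<integral>x. (sos e x - k)\<^sup>2 \<partial>M))"
proof -
  define trunc :: "(nat \<Rightarrow> nat \<Rightarrow> real) \<Rightarrow> nat \<Rightarrow> nat \<Rightarrow> real"
    where "trunc d i a = (if i < m \<and> a < m then d i a else 0)" for d i a
  obtain R where R: "\<And>d. (\<integral>x. sos d x \<partial>M) = 1 \<Longrightarrow> trunc d \<in> matrix_box m R"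
    using normalized_sos_in_matrix_box unfolding trunc_def by blast
  define D where "D = {d \<in> matrix_box m R. (\<integral>x. sos d x \<partial>M) = 1}"
  have "closed D"
    unfolding D_def
    by (intro continuous_closed_preimage_constant continuous_on_integral_sos compact_imp_closed
        compact_matrix_box)
  have "compact (matrix_box m R \<inter> D)"
    using compact_matrix_box \<open>closed D\<close> by (rule compact_Int_closed)
  also have "matrix_box m R \<inter> D = D"
    by (auto simp: D_def)
  finally have "compact D" .
  have sos_trunc: "sos (trunc d) = sos d" for d
    unfolding trunc_def by (rule sos_truncate)
  have trunc_in_D: "trunc d \<in> D" if "(\<integral>x. sos d x \<partial>M) = 1" for d
    using R[OF that] that by (simp add: D_def sos_trunc)
  then have "D \<noteq> {}"
    using exists_normalized_sos[OF assms] by blast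
  moreover have "continuous_on D (\<lambda>d. \<integral>x. (sos d x - k)\<^sup>2 \<partial>M)"
    using continuous_on_integral_sos(2)[of R] by (rule continuous_on_subset) (simp add: D_def)
  ultimately obtain d where "d \<in> D"
    and nearest: "\<And>e. e \<in> D \<Longrightarrow> (\<integral>x. (sos d x - k)\<^sup>2 \<partial>M) \<le> (\<integral>x. (sos e x - k)\<^sup>2 \<partial>M)"
    using continuous_attains_inf[OF \<open>compact D\<close>] by blast
  have "(\<integral>x. (sos d x - k)\<^sup>2 \<partial>M) \<le> (\<integral>x. (sos e x - k)\<^sup>2 \<partial>M)"
    if "(\<integral>x. sos e x \<partial>M) = 1" for e
    using nearest[OF trunc_in_D[OF that]] by (simp add: sos_trunc)
  with \<open>d \<in> D\<close> show ?thesis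
    by (auto simp: D_def)
qed

lemma sos_convex_combination:
  assumes "0 \<le> \<epsilon>" "\<epsilon> \<le> 1"
  shows "\<exists>e. \<forall>x. sos e x = (1 - \<epsilon>) * sos d x + \<epsilon> * (lincomb m B c x)\<^sup>2"
proof -
  define r where "r j = (if j < m then (\<lambda>a. sqrt (1 - \<epsilon>) * d j a) else (\<lambda>a. sqrt \<epsilon> * c a))" for j
  obtain e where e: "\<And>x. (\<Sum>j<Suc m. (lincomb m B (r j) x)\<^sup>2) = (\<Sum>i<m. (lincomb m B (e i) x)\<^sup>2)"
    using sum_squares_lincomb_reduce[of "{..<Suc m}" m B r] by auto
  have "(\<Sum>j<Suc m. (lincomb m B (r j) x)\<^sup>2) = (1 - \<epsilon>) * sos d x + \<epsilon> * (lincomb m B c x)\<^sup>2" for x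
    using assms by (simp add: r_def sos_def lincomb_scale power_mult_distrib sum_distrib_left)
  with e have "sos e x = (1 - \<epsilon>) * sos d x + \<epsilon> * (lincomb m B c x)\<^sup>2" for x
    by (simp add: sos_def)
  then show ?thesis
    by blast
qed

lemma nearest_sos_variational:
  assumes d: "(\<integral>x. sos d x \<partial>M) = 1"
    and nearest: "\<And>e. (\<integral>x. sos e x \<partial>M) = 1 \<Longrightarrow>
      (\<integral>x. (sos d x - k)\<^sup>2 \<partial>M) \<le> (\<integral>x. (sos e x - k)\<^sup>2 \<partial>M)"
    and c: "sqnorm c = 1"
  shows "0 \<le> (\<integral>x. (sos d x - k) * ((lincomb m B c x)\<^sup>2 - sos d x) \<partial>M)"
proof (rule first_variation_nonneg)
  show "(\<lambda>x. sos d x - k) \<in> Linf M" "(\<lambda>x. (lincomb m B c x)\<^sup>2 - sos d x) \<in> Linf M"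
    by (intro Linf_diff Linf_sos Linf_const Linf_power2 Linf_lincomb_basis)+
  fix \<epsilon> :: real
  assume "0 < \<epsilon>" "\<epsilon> < 1"
  then obtain e where e: "\<And>x. sos e x = (1 - \<epsilon>) * sos d x + \<epsilon> * (lincomb m B c x)\<^sup>2"
    using sos_convex_combination[of \<epsilon> d c] by auto
  have "(\<integral>x. sos e x \<partial>M)
      = (\<integral>x. (1 - \<epsilon>) * sos d x \<partial>M) + (\<integral>x. \<epsilon> * (lincomb m B c x)\<^sup>2 \<partial>M)"
    unfolding e
    by (intro Bochner_Integration.integral_add integrable_mult_right integrable_Linf Linf_sos
        integrable_square_lincomb)
  with d c have "(\<integral>x. sos e x \<partial>M) = 1"
    by (simp add: sqnorm_def)
  then have "(\<integral>x. (sos d x - k)\<^sup>2 \<partial>M) \<le> (\<integral>x. (sos e x - k)\<^sup>2 \<partial>M)"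
    by (rule nearest)
  moreover have "sos e x - k = (sos d x - k) + \<epsilon> * ((lincomb m B c x)\<^sup>2 - sos d x)" for x
    by (simp add: e algebra_simps)
  ultimately show "(\<integral>x. (sos d x - k)\<^sup>2 \<partial>M)
      \<le> (\<integral>x. (sos d x - k + \<epsilon> * ((lincomb m B c x)\<^sup>2 - sos d x))\<^sup>2 \<partial>M)"
    by (simp only:)
qed

lemma positive_definite_on_fspan_if_normalized:
  assumes "\<And>c. sqnorm c = 1 \<Longrightarrow> 0 < quad_form M u (lincomb m B c)"
  shows "positive_definite_on M (fspan m B) (quad_form M u)"
  unfolding positive_definite_on_def fspan_eq_range_lincomb
proof (intro ballI impI)
  fix f
  assume "f \<in> range (lincomb m B)" "nonzero_ae M f"
  then obtain c where f: "f = lincomb m B c" and "0 < sqnorm c"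
    by (auto simp: sqnorm_pos_iff)
  define t where "t = 1 / sqrt (sqnorm c)"
  have "0 < t"
    using \<open>0 < sqnorm c\<close> by (simp add: t_def)
  have "sqnorm (\<lambda>a. t * c a) = 1"
    using \<open>0 < sqnorm c\<close> unfolding sqnorm_scale by (simp add: t_def power_divide)
  then have "0 < quad_form M u (lincomb m B (\<lambda>a. t * c a))"
    by (rule assms)
  also have "quad_form M u (lincomb m B (\<lambda>a. t * c a)) = (\<integral>x. t\<^sup>2 * (u x * (f x)\<^sup>2) \<partial>M)"
    by (simp add: quad_form_def f lincomb_scale power_mult_distrib algebra_simps)
  also have "\<dots> = t\<^sup>2 * quad_form M u f"
    by (simp add: quad_form_def)
  finally show "0 < quad_form M u f"
    using \<open>0 < t\<close> by (simp add: zero_less_mult_iff)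
qed

lemma unit_sum_of_squares_if_sos_const:
  assumes "0 < k" "AE x in M. sos d x = k"
  shows "unit_sum_of_squares M (fspan m B)"
proof -
  have scaled: "(\<Sum>i<m. (lincomb m B (\<lambda>a. (1 / sqrt k) * d i a) x)\<^sup>2) = sos d x / k" for x
    unfolding sos_def lincomb_scale
    using \<open>0 < k\<close> by (simp add: power_mult_distrib power_divide sum_divide_distrib)
  from assms(2) have "AE x in M. (\<Sum>i<m. (lincomb m B (\<lambda>a. (1 / sqrt k) * d i a) x)\<^sup>2) = 1"
    by eventually_elim (use \<open>0 < k\<close> in \<open>simp only: scaled, simp\<close>)
  then show ?thesis
    unfolding unit_sum_of_squares_def fspan_eq_range_lincomb
    by (intro exI[of _ m] exI[of _ "\<lambda>i. lincomb m B (\<lambda>a. (1 / sqrt k) * d i a)"]) simp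
qed

lemma quad_form_nearest_sos_ge:
  assumes d: "(\<integral>x. sos d x \<partial>M) = 1"
    and nearest: "\<And>e. (\<integral>x. sos e x \<partial>M) = 1 \<Longrightarrow>
      (\<integral>x. (sos d x - k)\<^sup>2 \<partial>M) \<le> (\<integral>x. (sos e x - k)\<^sup>2 \<partial>M)"
    and mean: "(\<integral>x. sos d x - k \<partial>M) = 0"
    and c: "sqnorm c = 1"
  shows "(\<integral>x. (sos d x - k)\<^sup>2 \<partial>M) \<le> quad_form M (\<lambda>x. sos d x - k) (lincomb m B c)"
proof -
  define w where "w x = sos d x - k" for x
  have w: "w \<in> Linf M"
    unfolding w_def by (intro Linf_diff Linf_sos Linf_const)
  have "0 \<le> (\<integral>x. w x * ((lincomb m B c x)\<^sup>2 - sos d x) \<partial>M)"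
    using nearest_sos_variational[OF d nearest c] by (simp add: w_def)
  also have "\<dots> = quad_form M w (lincomb m B c) - (\<integral>x. w x * sos d x \<partial>M)"
    unfolding quad_form_def right_diff_distrib
    by (intro Bochner_Integration.integral_diff integrable_Linf Linf_mult w Linf_power2
        Linf_lincomb_basis Linf_sos)
  also have "(\<integral>x. w x * sos d x \<partial>M) = (\<integral>x. (w x)\<^sup>2 + k * w x \<partial>M)"
    by (simp add: w_def power2_eq_square algebra_simps)
  also have "\<dots> = (\<integral>x. (w x)\<^sup>2 \<partial>M) + k * (\<integral>x. w x \<partial>M)"
    by (simp add: Bochner_Integration.integral_add integrable_Linf Linf_power2 w)
  finally show ?thesis
    using mean by (simp add: w_def)
qed

theorem exists_positive_definite_weight:
  assumes "m > 0" "emeasure M (space M) > 0" and no_unit: "\<not> unit_sum_of_squares M (fspan m B)"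
  shows "\<exists>u\<in>Linf_star M. positive_definite_on M (fspan m B) (quad_form M u)"
proof -
  define V where "V = measure M (space M)"
  have "0 < V"
    using assms(2) by (simp add: V_def emeasure_eq_measure)
  obtain d where d: "(\<integral>x. sos d x \<partial>M) = 1" and nearest: "\<And>e. (\<integral>x. sos e x \<partial>M) = 1 \<Longrightarrow>
      (\<integral>x. (sos d x - 1 / V)\<^sup>2 \<partial>M) \<le> (\<integral>x. (sos e x - 1 / V)\<^sup>2 \<partial>M)"
    using exists_nearest_normalized_sos[OF \<open>m > 0\<close>, of "1 / V"] by blast
  define w where "w x = sos d x - 1 / V" for x
  have w: "w \<in> Linf M"
    unfolding w_def by (intro Linf_diff Linf_sos Linf_const)
  have "(\<integral>x. w x \<partial>M) = 0"
    unfolding w_def using d \<open>0 < V\<close>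
    by (subst Bochner_Integration.integral_diff) (auto simp: V_def intro: integrable_Linf Linf_sos)
  have "nonzero_ae M w"
    using unit_sum_of_squares_if_sos_const[of "1 / V" d] no_unit \<open>0 < V\<close>
    by (auto simp: nonzero_ae_def w_def elim: eventually_mono)
  with w have "0 < (\<integral>x. (w x)\<^sup>2 \<partial>M)"
    by (simp add: integral_power2_pos_iff)
  then have "0 < quad_form M w (lincomb m B c)" if "sqnorm c = 1" for c
    using quad_form_nearest_sos_ge[OF d nearest _ that] \<open>(\<integral>x. w x \<partial>M) = 0\<close>
    unfolding w_def by fastforce
  moreover have "w \<in> Linf_star M"
    using w \<open>(\<integral>x. w x \<partial>M) = 0\<close> by (simp add: Linf_star_def)
  ultimately show ?thesis
    using positive_definite_on_fspan_if_normalized by blast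
qed

end

lemma exists_positive_definite_weight_fspan:
  assumes "finite_measure M" "emeasure M (space M) > 0"
    and "\<And>j. j < n \<Longrightarrow> b j \<in> Linf M"
    and "\<exists>f\<in>fspan n b. nonzero_ae M f"
    and "\<not> unit_sum_of_squares M (fspan n b)"
  shows "\<exists>u\<in>Linf_star M. positive_definite_on M (fspan n b) (quad_form M u)"
proof -
  obtain m B where B: "\<forall>a<m. B a \<in> Linf M" "ae_independent M m B"
    and to_B: "ae_subset M (fspan n b) (fspan m B)" and from_B: "ae_subset M (fspan m B) (fspan n b)"
    using exists_ae_independent_basis[of n b M, OF assms(3)] by blast
  interpret ae_basis M m B
    using assms(1) B by (intro ae_basis.intro ae_basis_axioms.intro) auto
  have "m > 0"
  proof (rule ccontr)
    assume "\<not> m > 0"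
    obtain f where "f \<in> fspan n b" "nonzero_ae M f"
      using assms(4) by blast
    then obtain g where "g \<in> fspan m B" "AE x in M. f x = g x"
      using to_B by (auto simp: ae_subset_def)
    with \<open>\<not> m > 0\<close> have "AE x in M. f x = 0"
      by (simp add: fspan_eq_range_lincomb lincomb_def)
    with \<open>nonzero_ae M f\<close> show False
      by (simp add: nonzero_ae_def)
  qed
  moreover have "\<not> unit_sum_of_squares M (fspan m B)"
    using assms(5) unit_sum_of_squares_ae_subset[OF from_B] by blast
  ultimately obtain u where u: "u \<in> Linf_star M"
    and pd: "positive_definite_on M (fspan m B) (quad_form M u)"
    using exists_positive_definite_weight assms(2) by blast
  have "u \<in> borel_measurable M"
    using u by (simp add: Linf_star_def Linf_measurable)
  moreover have "fspan n b \<subseteq> borel_measurable M" "fspan m B \<subseteq> borel_measurable M"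
    using fspan_subset_Linf[of n b M, OF assms(3)] fspan_subset_Linf[of m B M, OF Linf_basis]
    by (auto intro: Linf_measurable)
  ultimately have "positive_definite_on M (fspan n b) (quad_form M u)"
    by (rule positive_definite_on_ae_subset[OF to_B pd])
  with u show ?thesis
    by blast
qed

theorem lemma2p2:
  fixes M :: "'a measure" and n :: nat and b :: "nat \<Rightarrow> 'a \<Rightarrow> real"
  assumes "finite_measure M"
    and "emeasure M (space M) > 0"
    and "\<And>j. j < n \<Longrightarrow> b j \<in> Linf M"
    and "\<exists>f\<in>fspan n b. nonzero_ae M f"
  shows "(\<forall>u\<in>Linf_star M. indefinite_on M (fspan n b) (quad_form M u))
     \<longleftrightarrow> (\<exists>(k::nat) fs. (\<forall>j<k. fs j \<in> fspan n b) \<and>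
              (AE x in M. (\<Sum>j<k. (fs j x)\<^sup>2) = 1))"
  unfolding unit_sum_of_squares_def[symmetric]
proof
  assume indefinite: "\<forall>u\<in>Linf_star M. indefinite_on M (fspan n b) (quad_form M u)"
  show "unit_sum_of_squares M (fspan n b)"
  proof (rule ccontr)
    assume "\<not> unit_sum_of_squares M (fspan n b)"
    then obtain u where "u \<in> Linf_star M" and pd: "positive_definite_on M (fspan n b) (quad_form M u)"
      using exists_positive_definite_weight_fspan[OF assms] by blast
    with indefinite obtain f where "f \<in> fspan n b" "nonzero_ae M f" "quad_form M u f \<le> 0"
      unfolding indefinite_on_def by blast
    with pd show False
      unfolding positive_definite_on_def by fastforce
  qed
next
  assume "unit_sum_of_squares M (fspan n b)"
  then show "\<forall>u\<in>Linf_star M. indefinite_on M (fspan n b) (quad_form M u)"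
    using finite_measure.indefinite_if_unit_sum_of_squares
        [OF assms(1,2) fspan_subset_Linf[of n b M, OF assms(3)]]
    by blast
qed

end
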